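(* Let $\mathcal{A}$ be a complex Banach algebra with identity, $a\in\mathcal{A}$, and $(a_n)$ a sequence in $\mathcal{A}$ with $a_n\overset{\nu}{\to}a$. If $U\subseteq\mathbb{C}$ is an open set with $0\notin U$ such that $U$ contains a connected component of $\sigma(a)$, then there exists $n_0\in\mathbb{N}$ such that for all $n\geq n_0$, $U$ contains a connected component of $\sigma(a_n)$.
   Context: $\sigma(x)$ is the spectrum of $x$ in $\mathcal{A}$. A sequence $(x_n)$ in $\mathcal{A}$ is $\nu$-convergent to $x$, written $x_n\overset{\nu}{\to}x$, if $(\|x_n\|)$ is bounded, $\|(x_n-x)x\|\to0$ and $\|(x_n-x)x_n\|\to0$. *)

theory Defs
  imports "HOL-Analysis.Analysis"
begin

text \<open>A complex Banach
  algebra with identity is then a type of class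
  complex_normed_algebra_1 and banach.\<close>

class complex_normed_algebra_1 = real_normed_algebra_1 +
  fixes scaleC :: "complex \<Rightarrow> 'a \<Rightarrow> 'a"
  assumes scaleC_add_right: "scaleC c (x + y) = scaleC c x + scaleC c y"
    and scaleC_add_left: "scaleC (c + d) x = scaleC c x + scaleC d x"
    and scaleC_scaleC: "scaleC c (scaleC d x) = scaleC (c * d) x"
    and scaleC_one: "scaleC 1 x = x"
    and scaleC_of_real: "scaleC (complex_of_real r) x = scaleR r x"
    and norm_scaleC: "norm (scaleC c x) = cmod c * norm x"
    and mult_scaleC_left: "scaleC c x * y = scaleC c (x * y)"
    and mult_scaleC_right: "x * scaleC c y = scaleC c (x * y)"

definition ba_invertible :: "'a::ring_1 \<Rightarrow> bool" where
  "ba_invertible x \<longleftrightarrow> (\<exists>y. x * y = 1 \<and> y * x = 1)"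

definition spectrum :: "'a::complex_normed_algebra_1 \<Rightarrow> complex set" where
  "spectrum x = {z. \<not> ba_invertible (scaleC z 1 - x)}"

definition nu_conv :: "(nat \<Rightarrow> 'a::real_normed_algebra) \<Rightarrow> 'a \<Rightarrow> bool" where
  "nu_conv xs x \<longleftrightarrow> (\<exists>M. \<forall>n. norm (xs n) \<le> M)
     \<and> (\<lambda>n. norm ((xs n - x) * x)) \<longlonglongrightarrow> 0
     \<and> (\<lambda>n. norm ((xs n - x) * xs n)) \<longlonglongrightarrow> 0"

end

theory Submission
  imports Defs
begin

text \<open>
  Let C be a component of sigma(a) inside U. Since sigma(a) is compact, C lies in a relatively
  clopen part K of sigma(a) contained in U, and K has a bounded open neighbourhood W with
  closure in U whose frontier misses sigma(a). With a_n = a + d_n and R the resolvent of a at z,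
  R + R d_n R inverts z - a_n up to an error controlled by |d_n d_n| and |d_n a| / |z|, which
  nu-convergence makes small away from z = 0; so for large n the resolvents of a_n are
  uniformly bounded by some B on the frontier of W.

  If sigma(a_n) missed W, a maximum principle for the resolvent norm would give the same bound B
  at a point l of K on the frontier of sigma(a). But there the resolvent of a_n eventually
  exceeds every bound: the identity a = R(a_n, l) (l - a_n) a, tested against resolvents of a
  at regular points mu near l (whose norms blow up like 1 / |mu - l|), shows that a bounded
  R(a_n, l) would force |l| to be small, while l \<noteq> 0 because 0 is not in U. So for large n,
  sigma(a_n) meets W but not its frontier, and the component of sigma(a_n) through a point of
  W stays inside W.
\<close>

section \<open>Complex scalars\<close>

definition of_complex :: "complex \<Rightarrow> 'a::complex_normed_algebra_1" where
  "of_complex c = scaleC c 1"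

lemma scaleC_eq_of_complex_mult: "scaleC c x = of_complex c * (x::'a::complex_normed_algebra_1)"
  by (simp add: of_complex_def mult_scaleC_left)

lemma of_complex_add:
  "of_complex (c + d) = (of_complex c + of_complex d :: 'a::complex_normed_algebra_1)"
  by (simp add: of_complex_def scaleC_add_left)

lemma of_complex_mult:
  "of_complex (c * d) = (of_complex c * of_complex d :: 'a::complex_normed_algebra_1)"
  by (simp add: of_complex_def mult_scaleC_left scaleC_scaleC)

lemma of_complex_1 [simp]: "of_complex 1 = (1 :: 'a::complex_normed_algebra_1)"
  by (simp add: of_complex_def scaleC_one)

lemma of_complex_0 [simp]: "of_complex 0 = (0 :: 'a::complex_normed_algebra_1)"
  by (metis add_cancel_right_right add_0 of_complex_add)

lemma of_complex_minus: "of_complex (- c) = (- of_complex c :: 'a::complex_normed_algebra_1)"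
  by (metis of_complex_add of_complex_0 eq_neg_iff_add_eq_0)

lemma of_complex_diff:
  "of_complex (c - d) = (of_complex c - of_complex d :: 'a::complex_normed_algebra_1)"
  by (simp only: diff_conv_add_uminus of_complex_add of_complex_minus)

lemma of_complex_sum:
  "of_complex (sum f A) = (\<Sum>j\<in>A. of_complex (f j) :: 'a::complex_normed_algebra_1)"
  by (induction A rule: infinite_finite_induct) (simp_all add: of_complex_add)

lemma of_complex_commute: "of_complex c * x = x * (of_complex c :: 'a::complex_normed_algebra_1)"
  by (simp add: of_complex_def mult_scaleC_left mult_scaleC_right)

lemma norm_of_complex_mult:
  "norm (of_complex c * x) = cmod c * norm (x::'a::complex_normed_algebra_1)"
  by (metis norm_scaleC scaleC_eq_of_complex_mult)

lemma norm_of_complex [simp]: "norm (of_complex c :: 'a::complex_normed_algebra_1) = cmod c"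
  using norm_of_complex_mult[of c "1::'a"] by simp

lemma power_of_complex_mult:
  "(of_complex c * x) ^ k = of_complex (c ^ k) * (x ^ k :: 'a::complex_normed_algebra_1)"
proof (induction k)
  case (Suc k)
  have "(of_complex c * x) ^ Suc k = of_complex c * x * (of_complex (c ^ k) * x ^ k)"
    by (simp add: Suc)
  also have "\<dots> = of_complex c * of_complex (c ^ k) * (x * x ^ k)"
    by (metis of_complex_commute mult.assoc)
  finally show ?case by (simp add: of_complex_mult)
qed simp

section \<open>Inverses and the Neumann series\<close>

(* ba_inverse x is an unspecified element unless x is invertible; so is resolvent b z for z in
   the spectrum of b. *)
definition ba_inverse :: "'a::ring_1 \<Rightarrow> 'a" where
  "ba_inverse x = (SOME y. x * y = 1 \<and> y * x = 1)"

lemma ba_inverse_cancel: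
  assumes "ba_invertible x"
  shows "x * ba_inverse x = 1" "ba_inverse x * x = 1"
  using someI_ex[OF assms[unfolded ba_invertible_def]] by (auto simp: ba_inverse_def)

lemma ba_inverse_unique:
  assumes "x * y = 1" "z * x = (1::'a::ring_1)"
  shows "ba_invertible x" "ba_inverse x = y"
proof -
  have "z = y" by (metis assms mult.assoc mult_1_left mult_1_right)
  then show inv: "ba_invertible x" using assms by (auto simp: ba_invertible_def)
  have "ba_inverse x = ba_inverse x * (x * y)" by (simp add: assms)
  also have "\<dots> = y" by (metis ba_inverse_cancel(2)[OF inv] mult.assoc mult_1_left)
  finally show "ba_inverse x = y" .
qed

lemma ba_inverse_mult:
  fixes x y :: "'a::ring_1"
  assumes "ba_invertible x" "ba_invertible y"
  shows "ba_invertible (x * y)" "ba_inverse (x * y) = ba_inverse y * ba_inverse x"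
proof -
  have "x * y * (ba_inverse y * ba_inverse x) = 1"
    by (metis ba_inverse_cancel(1) assms mult.assoc mult_1_left)
  moreover have "ba_inverse y * ba_inverse x * (x * y) = 1"
    by (metis ba_inverse_cancel(2) assms mult.assoc mult_1_left)
  ultimately show "ba_invertible (x * y)" "ba_inverse (x * y) = ba_inverse y * ba_inverse x"
    using ba_inverse_unique by blast+
qed

lemma neumann_series:
  fixes x :: "'a::{real_normed_algebra_1, banach}"
  assumes "norm x < 1"
  shows "ba_invertible (1 - x)" "(\<lambda>k. x ^ k) sums ba_inverse (1 - x)"
proof -
  have "summable (\<lambda>k. norm x ^ k)" using assms by simp
  then have "summable (\<lambda>k. norm (x ^ k))"
    by (rule summable_comparison_test[rotated]) (auto intro: norm_power_ineq)
  then have s: "(\<lambda>k. x ^ k) sums (\<Sum>k. x ^ k)" by (simp add: summable_norm_cancel summable_sums)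
  have telescope: "(\<lambda>k. x ^ k - x ^ Suc k) sums 1"
    using telescope_sums'[OF LIMSEQ_power_zero[OF assms]] by simp
  have "(\<lambda>k. x ^ k * (1 - x)) = (\<lambda>k. x ^ k - x ^ Suc k)"
    by (simp add: algebra_simps power_commutes)
  then have l: "(\<Sum>k. x ^ k) * (1 - x) = 1"
    using sums_mult2[OF s, of "1 - x"] telescope sums_unique2 by metis
  have "(\<lambda>k. (1 - x) * x ^ k) = (\<lambda>k. x ^ k - x ^ Suc k)"
    by (simp add: algebra_simps)
  then have r: "(1 - x) * (\<Sum>k. x ^ k) = 1"
    using sums_mult[OF s, of "1 - x"] telescope sums_unique2 by metis
  show "ba_invertible (1 - x)" "(\<lambda>k. x ^ k) sums ba_inverse (1 - x)"
    using ba_inverse_unique[OF r l] s by simp_all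
qed

lemma norm_ba_inverse_one_minus_le:
  fixes x :: "'a::{real_normed_algebra_1, banach}"
  assumes "norm x < 1"
  shows "norm (ba_inverse (1 - x)) \<le> 1 / (1 - norm x)"
proof -
  have "summable (\<lambda>k. norm x ^ k)" using assms by simp
  moreover have "norm (\<Sum>k<n. x ^ k) \<le> (\<Sum>k<n. norm x ^ k)" for n
    by (rule order_trans[OF norm_sum sum_mono]) (rule norm_power_ineq)
  ultimately have "norm (ba_inverse (1 - x)) \<le> (\<Sum>k. norm x ^ k)"
    using neumann_series(2)[OF assms]
    by (intro tendsto_le[OF _ summable_LIMSEQ tendsto_norm]) (auto simp: sums_def)
  also have "\<dots> = 1 / (1 - norm x)" using assms by (simp add: suminf_geometric)
  finally show ?thesis .
qed

lemma ba_invertible_one_minus_small: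
  fixes x :: "'a::{real_normed_algebra_1, banach}"
  assumes "norm x \<le> 1/2"
  shows "ba_invertible (1 - x)" "norm (ba_inverse (1 - x)) \<le> 2"
proof -
  have x: "norm x < 1" using assms by simp
  show "ba_invertible (1 - x)" using neumann_series(1)[OF x] .
  have "1 / (1 - norm x) \<le> 2" using assms by (simp add: field_simps)
  then show "norm (ba_inverse (1 - x)) \<le> 2" using norm_ba_inverse_one_minus_le[OF x] by linarith
qed

lemma ba_inverse_perturb:
  fixes y h :: "'a::{real_normed_algebra_1, banach}"
  assumes y: "ba_invertible y" and small: "norm (ba_inverse y) * norm h \<le> 1/2"
  shows "ba_invertible (y + h)"
    "norm (ba_inverse (y + h) - ba_inverse y) \<le> 2 * norm (ba_inverse y)^2 * norm h"
proof -
  define N where "N = ba_inverse y"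
  define x where "x = - (N * h)"
  have yN: "y * N = 1" "N * y = 1" using ba_inverse_cancel[OF y] by (auto simp: N_def)
  have x: "norm x \<le> 1/2" using small norm_mult_ineq[of N h] by (simp add: x_def N_def)
  have "y * (1 - x) = y + h" by (simp add: x_def algebra_simps mult.assoc[symmetric] yN)
  then have inv: "ba_invertible (y + h)" "ba_inverse (y + h) = ba_inverse (1 - x) * N"
    using ba_inverse_mult[OF y ba_invertible_one_minus_small(1)[OF x]] by (simp_all add: N_def)
  then show "ba_invertible (y + h)" by simp
  define G where "G = ba_inverse (y + h)"
  have bound: "norm G \<le> 2 * norm N"
    unfolding G_def inv(2)
    by (rule order_trans[OF norm_mult_ineq mult_right_mono])
      (simp_all add: ba_invertible_one_minus_small(2)[OF x])
  have "G - N = G - G * (y + h) * N"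
    using ba_inverse_cancel(2)[OF inv(1)] by (simp add: G_def)
  also have "\<dots> = - (G * h * N)"
    by (simp add: algebra_simps mult.assoc yN)
  finally have "norm (G - N) = norm (G * h * N)" by simp
  also have "\<dots> \<le> norm G * norm h * norm N"
    by (rule order_trans[OF norm_mult_ineq mult_right_mono[OF norm_mult_ineq]]) simp
  also have "\<dots> \<le> 2 * norm N * norm h * norm N"
    by (intro mult_right_mono bound) auto
  finally show "norm (ba_inverse (y + h) - ba_inverse y) \<le> 2 * norm (ba_inverse y)^2 * norm h"
    by (simp add: G_def N_def power2_eq_square mult_ac)
qed

lemma ba_invertible_approx_inverse:
  fixes x X e1 e2 :: "'a::{real_normed_algebra_1, banach}"
  assumes "x * X = 1 - e1" "X * x = 1 - e2" "norm e1 \<le> 1/2" "norm e2 \<le> 1/2"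
  shows "ba_invertible x" "norm (ba_inverse x) \<le> 2 * norm X"
proof -
  have "ba_invertible (1 - e1)" "ba_invertible (1 - e2)"
    using ba_invertible_one_minus_small(1) assms(3,4) by blast+
  then have "x * (X * ba_inverse (1 - e1)) = 1" "(ba_inverse (1 - e2) * X) * x = 1"
    using assms(1,2) ba_inverse_cancel by (metis mult.assoc)+
  then have inv: "ba_invertible x" "ba_inverse x = X * ba_inverse (1 - e1)"
    using ba_inverse_unique by blast+
  then show "ba_invertible x" by simp
  show "norm (ba_inverse x) \<le> 2 * norm X"
    unfolding inv(2) using ba_invertible_one_minus_small(2)[OF assms(3)]
    by (metis mult.commute mult_left_mono norm_ge_zero norm_mult_ineq order_trans)
qed

section \<open>Spectrum and resolvent\<close>

definition resolvent :: "'a::complex_normed_algebra_1 \<Rightarrow> complex \<Rightarrow> 'a" where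
  "resolvent b z = ba_inverse (of_complex z - b)"

lemma spectrum_iff: "z \<in> spectrum b \<longleftrightarrow> \<not> ba_invertible (of_complex z - b)"
  by (simp add: spectrum_def of_complex_def)

lemma resolvent_cancel:
  fixes b :: "'a::complex_normed_algebra_1"
  assumes "z \<notin> spectrum b"
  shows "(of_complex z - b) * resolvent b z = 1" "resolvent b z * (of_complex z - b) = 1"
  using ba_inverse_cancel assms by (simp_all add: spectrum_iff resolvent_def)

lemma resolvent_perturb:
  fixes b :: "'a::{complex_normed_algebra_1, banach}"
  assumes "z \<notin> spectrum b" "norm (resolvent b z) * cmod (w - z) \<le> 1/2"
  shows "w \<notin> spectrum b"
    "norm (resolvent b w - resolvent b z) \<le> 2 * norm (resolvent b z)^2 * cmod (w - z)"
proof -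
  have eq: "(of_complex z - b) + of_complex (w - z) = of_complex w - b"
    by (simp add: of_complex_diff)
  have "ba_invertible (of_complex z - b)" using assms(1) by (simp add: spectrum_iff)
  note perturb = ba_inverse_perturb[OF this, of "of_complex (w - z)", unfolded eq]
  show "w \<notin> spectrum b"
    "norm (resolvent b w - resolvent b z) \<le> 2 * norm (resolvent b z)^2 * cmod (w - z)"
    using perturb assms(2) by (simp_all add: spectrum_iff resolvent_def)
qed

lemma norm_resolvent_dist_gt:
  fixes b :: "'a::{complex_normed_algebra_1, banach}"
  assumes "z \<in> spectrum b" "w \<notin> spectrum b"
  shows "1/2 < norm (resolvent b w) * cmod (z - w)"
  using resolvent_perturb(1)[OF assms(2), of z] assms(1) by force

lemma spectrum_subset_cball:
  fixes b :: "'a::{complex_normed_algebra_1, banach}"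
  shows "spectrum b \<subseteq> cball 0 (norm b)"
proof
  fix z assume z: "z \<in> spectrum b"
  show "z \<in> cball 0 (norm b)"
  proof (rule ccontr)
    assume "z \<notin> cball 0 (norm b)"
    then have big: "norm b < cmod z" by simp
    then have "z \<noteq> 0" using norm_ge_zero[of b] by auto
    then have z_inv: "of_complex z * of_complex (1 / z) = (1::'a)"
      "of_complex (1 / z) * of_complex z = (1::'a)"
      by (simp_all flip: of_complex_mult)
    then have "ba_invertible (of_complex z :: 'a)" using ba_inverse_unique by blast
    moreover have "norm (of_complex (1 / z) * b) < 1"
      using big norm_ge_zero[of b] by (simp add: norm_of_complex_mult norm_divide divide_less_eq)
    then have "ba_invertible (1 - of_complex (1 / z) * b)" by (rule neumann_series(1))
    moreover have "of_complex z * (1 - of_complex (1 / z) * b) = of_complex z - b"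
      using z_inv(1) by (simp add: algebra_simps mult.assoc[symmetric])
    ultimately have "ba_invertible (of_complex z - b)" by (metis ba_inverse_mult(1))
    then show False using z by (simp add: spectrum_iff)
  qed
qed

lemma open_resolvent_set:
  fixes b :: "'a::{complex_normed_algebra_1, banach}"
  shows "open (- spectrum b)"
  unfolding open_contains_ball
proof
  fix z assume "z \<in> - spectrum b"
  then have z: "z \<notin> spectrum b" by simp
  define r where "r = norm (resolvent b z) + 1"
  have r: "r > 0" unfolding r_def using norm_ge_zero[of "resolvent b z"] by linarith
  define e where "e = 1 / (2 * r)"
  have "norm (resolvent b z) * cmod (w - z) \<le> 1/2" if "w \<in> ball z e" for w
  proof -
    have "norm (resolvent b z) * cmod (w - z) \<le> r * e"
      using that by (intro mult_mono) (auto simp: r_def dist_norm norm_minus_commute)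
    also have "\<dots> = 1/2" using r by (simp add: e_def)
    finally show ?thesis .
  qed
  then have "ball z e \<subseteq> - spectrum b" using resolvent_perturb(1)[OF z] by blast
  moreover have "e > 0" using r by (simp add: e_def)
  ultimately show "\<exists>e>0. ball z e \<subseteq> - spectrum b" by blast
qed

lemma compact_spectrum:
  fixes b :: "'a::{complex_normed_algebra_1, banach}"
  shows "compact (spectrum b)"
  using open_resolvent_set[of b] spectrum_subset_cball[of b]
  by (metis bounded_cball bounded_subset closed_open compact_eq_bounded_closed)

lemma continuous_on_resolvent:
  fixes b :: "'a::{complex_normed_algebra_1, banach}"
  shows "continuous_on (- spectrum b) (resolvent b)"
proof (rule continuous_at_imp_continuous_on, intro ballI)
  fix z assume "z \<in> - spectrum b"
  then have z: "z \<notin> spectrum b" by simp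
  define r where "r = norm (resolvent b z)"
  have "\<forall>\<^sub>F w in at z. r * cmod (w - z) < 1/2"
    using tendsto_mult_right_zero[OF tendsto_norm_zero[OF LIM_zero[OF tendsto_ident_at]], of r]
    by (rule order_tendstoD) simp
  then have "\<forall>\<^sub>F w in at z. norm (resolvent b w - resolvent b z) \<le> 2 * r^2 * cmod (w - z)"
    by eventually_elim (use resolvent_perturb(2)[OF z] in \<open>simp add: r_def\<close>)
  moreover have "((\<lambda>w. 2 * r^2 * cmod (w - z)) \<longlongrightarrow> 0) (at z)"
    using tendsto_mult_right_zero[OF tendsto_norm_zero[OF LIM_zero[OF tendsto_ident_at]]] .
  ultimately have "((\<lambda>w. resolvent b w - resolvent b z) \<longlongrightarrow> 0) (at z)"
    by (rule Lim_null_comparison)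
  then show "isCont (resolvent b) z"
    unfolding isCont_def by (rule LIM_zero_cancel)
qed

lemma resolvent_sums:
  fixes b :: "'a::{complex_normed_algebra_1, banach}"
  assumes z: "z \<notin> spectrum b" and small: "cmod w * norm (resolvent b z) < 1"
  shows "(\<lambda>k. of_complex ((- w) ^ k) * resolvent b z ^ Suc k) sums resolvent b (z + w)"
proof -
  define R where "R = resolvent b z"
  define x where "x = of_complex (- w) * R"
  have x: "norm x < 1" using small by (simp add: x_def norm_of_complex_mult R_def)
  have inv_z: "ba_invertible (of_complex z - b)" using z by (simp add: spectrum_iff)
  have "(of_complex z - b) * x = - of_complex w"
    using resolvent_cancel(1)[OF z] unfolding x_def R_def
    by (metis mult.assoc mult.right_neutral of_complex_commute of_complex_minus)
  then have "of_complex (z + w) - b = (of_complex z - b) * (1 - x)"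
    by (simp add: algebra_simps of_complex_add)
  then have "resolvent b (z + w) = ba_inverse (1 - x) * R"
    using ba_inverse_mult(2)[OF inv_z neumann_series(1)[OF x]] by (simp add: resolvent_def R_def)
  moreover have "x ^ k * R = of_complex ((- w) ^ k) * R ^ Suc k" for k
    unfolding x_def power_of_complex_mult by (simp add: mult.assoc power_commutes)
  ultimately show ?thesis
    using sums_mult2[OF neumann_series(2)[OF x], of R] by (simp add: R_def)
qed

section \<open>A maximum principle for the norm of the resolvent\<close>

text \<open>Averaging the Taylor series of the resolvent over the m-th roots of unity kills all terms
  of order \<open>0 < k < m\<close>. The resulting discrete mean value inequality stands in for the
  subharmonicity of the norm of a Banach-algebra-valued holomorphic function.\<close>

lemma sum_resolvent_circle_sums:
  fixes b :: "'a::{complex_normed_algebra_1, banach}"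
  assumes z: "z \<notin> spectrum b" and \<omega>: "cmod \<omega> = 1" and small: "\<bar>\<rho>\<bar> * norm (resolvent b z) < 1"
  shows "(\<lambda>k. of_complex ((- of_real \<rho>) ^ k * (\<Sum>j<m. (\<omega> ^ j) ^ k)) * resolvent b z ^ Suc k)
    sums (\<Sum>j<m. resolvent b (z + of_real \<rho> * \<omega> ^ j))"
proof -
  have "cmod (of_real \<rho> * \<omega> ^ j) * norm (resolvent b z) < 1" for j
    using small \<omega> by (simp add: norm_mult norm_power)
  then have "(\<lambda>k. \<Sum>j<m. of_complex ((- (of_real \<rho> * \<omega> ^ j)) ^ k) * resolvent b z ^ Suc k)
      sums (\<Sum>j<m. resolvent b (z + of_real \<rho> * \<omega> ^ j))"
    by (intro sums_sum resolvent_sums[OF z])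
  moreover have "(\<Sum>j<m. of_complex ((- (of_real \<rho> * \<omega> ^ j)) ^ k) * resolvent b z ^ Suc k)
      = of_complex ((- of_real \<rho>) ^ k * (\<Sum>j<m. (\<omega> ^ j) ^ k)) * resolvent b z ^ Suc k" for k
    unfolding sum_distrib_left sum_distrib_right of_complex_sum
    by (intro sum.cong refl) (metis minus_mult_left power_mult_distrib)
  ultimately show ?thesis by simp
qed

lemma sum_powers_root_of_unity:
  assumes "0 < k" "k < m"
  shows "(\<Sum>j<m. (cis (2 * pi / m) ^ j) ^ k) = 0"
proof -
  define \<omega> where "\<omega> = cis (2 * pi / m)"
  have m: "0 < m" using assms by simp
  have "\<omega> ^ k = cis (2 * pi * real k / real m)"
    unfolding \<omega>_def Complex.DeMoivre by (simp add: field_simps)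
  also have "\<dots> \<noteq> cis (2 * pi * real 0 / real m)"
    using inj_on_contraD[OF bij_betw_imp_inj_on[OF Complex.bij_betw_roots_unity[OF m]], of k 0]
      assms by auto
  finally have "\<omega> ^ k \<noteq> 1" by simp
  moreover have "\<omega> ^ m = 1" unfolding \<omega>_def Complex.DeMoivre using m by (simp add: complex_eq_iff)
  then have "(\<omega> ^ k) ^ m = 1" by (metis power_mult mult.commute power_one)
  ultimately have "(\<Sum>j<m. (\<omega> ^ k) ^ j) = 0" by (simp add: sum_gp_strict)
  then show ?thesis by (simp add: \<omega>_def power_mult[symmetric] mult.commute)
qed

lemma norm_sums_minus_first_le:
  fixes f :: "nat \<Rightarrow> 'a::banach"
  assumes f: "f sums s" and bound: "\<And>k. norm (f k) \<le> C * t ^ k" and t: "0 \<le> t" "t < 1"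
    and gap: "\<And>k. 0 < k \<Longrightarrow> k < m \<Longrightarrow> f k = 0" and m: "0 < m"
  shows "norm (s - f 0) \<le> C * t ^ m / (1 - t)"
proof -
  have "(\<Sum>k<m. f k) = f 0 + (\<Sum>k\<in>{..<m} - {0}. f k)"
    using m by (simp add: sum.remove)
  also have "(\<Sum>k\<in>{..<m} - {0}. f k) = 0" using gap by (intro sum.neutral) auto
  finally have "(\<lambda>i. f (i + m)) sums (s - f 0)"
    using f by (simp add: sums_iff_shift)
  moreover have "(\<lambda>i. C * t ^ m * t ^ i) sums (C * t ^ m / (1 - t))"
    using sums_mult[OF geometric_sums, of t "C * t ^ m"] t by simp
  moreover have "norm (f (i + m)) \<le> C * t ^ m * t ^ i" for i
    using bound[of "i + m"] by (simp add: power_add mult_ac)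
  ultimately show ?thesis
    by (metis norm_suminf_le sums_summable sums_unique)
qed

lemma norm_resolvent_le_circle_mean:
  fixes b :: "'a::{complex_normed_algebra_1, banach}"
  assumes z: "z \<notin> spectrum b" and \<rho>: "0 < \<rho>" "\<rho> * norm (resolvent b z) \<le> 1/4" and m: "0 < m"
  shows "m * norm (resolvent b z)
    \<le> (\<Sum>j<m. norm (resolvent b (z + of_real \<rho> * cis (2 * pi / m) ^ j)))
      + 2 * m * norm (resolvent b z) / 4 ^ m"
proof -
  define \<omega> where "\<omega> = cis (2 * pi / m)"
  define R where "R = resolvent b z"
  define t where "t = \<rho> * norm R"
  have t: "0 \<le> t" "t \<le> 1/4" using \<rho> by (auto simp: t_def R_def)
  define c where "c k = of_complex ((- of_real \<rho>) ^ k * (\<Sum>j<m. (\<omega> ^ j) ^ k)) * R ^ Suc k" for k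
  define T where "T = (\<Sum>j<m. resolvent b (z + of_real \<rho> * \<omega> ^ j))"
  have "c sums T"
    unfolding c_def T_def R_def using \<rho>
    by (intro sum_resolvent_circle_sums[OF z]) (auto simp: \<omega>_def)
  moreover have "norm (c k) \<le> m * norm R * t ^ k" for k
  proof -
    have "cmod (\<Sum>j<m. (\<omega> ^ j) ^ k) \<le> m"
      using norm_sum[of "\<lambda>j. (\<omega> ^ j) ^ k" "{..<m}"] by (simp add: \<omega>_def norm_power)
    then have "norm (c k) \<le> \<rho> ^ k * m * norm (R ^ Suc k)"
      using \<rho> by (simp add: c_def norm_of_complex_mult norm_mult norm_power mult_right_mono)
    also have "\<dots> \<le> \<rho> ^ k * m * norm R ^ Suc k"
      using \<rho> by (intro mult_left_mono norm_power_ineq) auto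
    finally show ?thesis by (simp add: t_def power_mult_distrib mult_ac)
  qed
  moreover have "c k = 0" if "0 < k" "k < m" for k
    using sum_powers_root_of_unity[OF that] by (simp add: c_def \<omega>_def)
  ultimately have "norm (T - c 0) \<le> m * norm R * t ^ m / (1 - t)"
    using t m by (intro norm_sums_minus_first_le) auto
  also have "\<dots> = m * norm R * t ^ m * (1 / (1 - t))" by simp
  also have "\<dots> \<le> m * norm R * (1/4) ^ m * 2"
    using t by (intro mult_mono mult_left_mono power_mono) (auto simp: field_simps)
  finally have tail: "norm (T - c 0) \<le> 2 * m * norm R / 4 ^ m" by (simp add: power_divide mult_ac)
  have "m * norm R = norm (c 0)" by (simp add: c_def norm_of_complex_mult)
  also have "\<dots> \<le> norm T + norm (T - c 0)" by (metis norm_triangle_sub norm_minus_commute)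
  also have "norm T \<le> (\<Sum>j<m. norm (resolvent b (z + of_real \<rho> * \<omega> ^ j)))"
    unfolding T_def by (rule norm_sum)
  finally show ?thesis using tail by (simp add: R_def \<omega>_def)
qed

lemma norm_resolvent_eq_of_circle_le:
  fixes b :: "'a::{complex_normed_algebra_1, banach}"
  assumes z: "z \<notin> spectrum b" and \<rho>: "0 < \<rho>" "\<rho> * norm (resolvent b z) \<le> 1/4"
    and circle: "\<And>w. w \<in> sphere z \<rho> \<Longrightarrow> norm (resolvent b w) \<le> norm (resolvent b z)"
  shows "norm (resolvent b (z + of_real \<rho>)) = norm (resolvent b z)"
proof -
  define M where "M = norm (resolvent b z)"
  define M' where "M' = norm (resolvent b (z + of_real \<rho>))"
  have "M' \<le> M" using circle \<rho> by (simp add: M_def M'_def dist_norm)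
  moreover have "\<not> M' < M"
  proof
    assume "M' < M"
    obtain m' :: nat where m': "2 * M / (M - M') < m'" using reals_Archimedean2 by blast
    define m where "m = Suc m'"
    have m0: "0 < m" by (simp add: m_def)
    define f where "f j = norm (resolvent b (z + of_real \<rho> * cis (2 * pi / m) ^ j))" for j
    have "(\<Sum>j<m. f j) = M' + (\<Sum>j<m'. f (Suc j))"
      unfolding m_def sum.lessThan_Suc_shift by (simp add: f_def M'_def)
    also have "(\<Sum>j<m'. f (Suc j)) \<le> (\<Sum>j<m'. M)"
      using circle \<rho> by (intro sum_mono) (simp add: f_def M_def dist_norm norm_mult norm_power)
    finally have "(\<Sum>j<m. f j) \<le> M' + m' * M" by simp
    moreover have "m * M \<le> (\<Sum>j<m. f j) + 2 * m * M / 4 ^ m"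
      using norm_resolvent_le_circle_mean[OF z \<rho> m0] by (simp add: f_def M_def)
    ultimately have "M * m \<le> M' + m' * M + 2 * M * m / 4 ^ m" by (simp add: mult_ac)
    then have "M - M' \<le> 2 * M * m / 4 ^ m" by (simp add: m_def algebra_simps)
    also have "\<dots> \<le> 2 * M * m / (m * m)"
    proof -
      have "real m < 2 ^ m"
        using less_exp[of m] by (metis of_nat_less_iff of_nat_numeral of_nat_power)
      then have "real m * real m \<le> 4 ^ m"
        by (metis less_imp_le mult_mono' of_nat_0_le_iff power_mult_distrib num_double
            numeral_times_numeral)
      then show ?thesis using m0 by (intro divide_left_mono) (auto simp: M_def)
    qed
    also have "\<dots> = 2 * M / m" using m0 by simp
    also have "\<dots> < M - M'"
    proof -
      have "2 * M < m' * (M - M')" using m' \<open>M' < M\<close> by (simp add: divide_less_eq)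
      also have "\<dots> \<le> m * (M - M')" using \<open>M' < M\<close> by (simp add: m_def)
      finally show ?thesis using m0 by (simp add: divide_less_eq mult.commute)
    qed
    finally show False by simp
  qed
  ultimately show ?thesis by (simp add: M_def M'_def)
qed

lemma continuous_attains_sup_max_Re:
  fixes f :: "complex \<Rightarrow> real"
  assumes K: "compact K" "K \<noteq> {}" and f: "continuous_on K f"
  obtains z where "z \<in> K" "\<And>w. w \<in> K \<Longrightarrow> f w \<le> f z"
    "\<And>w. w \<in> K \<Longrightarrow> f w = f z \<Longrightarrow> Re w \<le> Re z"
proof -
  obtain z0 where z0: "z0 \<in> K" "\<And>w. w \<in> K \<Longrightarrow> f w \<le> f z0"
    using continuous_attains_sup[OF K f] by blast
  define S where "S = {w \<in> K. f w = f z0}"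
  have "closed S"
    unfolding S_def by (rule continuous_closed_preimage_constant[OF f compact_imp_closed[OF K(1)]])
  moreover have "S = K \<inter> S" by (auto simp: S_def)
  ultimately have "compact S" using compact_Int_closed[OF K(1), of S] by simp
  moreover have "S \<noteq> {}" using z0 by (auto simp: S_def)
  ultimately obtain z where "z \<in> S" "\<And>w. w \<in> S \<Longrightarrow> Re w \<le> Re z"
    using continuous_attains_sup[of S Re] continuous_on_Re[OF continuous_on_id] by auto
  then show thesis using that z0(2) by (auto simp: S_def)
qed

text \<open>At a point of maximal resolvent norm with maximal real part, the previous lemma would make
  the point just to its right maximal as well.\<close>

lemma norm_resolvent_maximum_principle:
  fixes b :: "'a::{complex_normed_algebra_1, banach}"
  assumes W: "bounded W" "open W" and resolvent_set: "closure W \<inter> spectrum b = {}"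
    and frontier: "\<And>w. w \<in> frontier W \<Longrightarrow> norm (resolvent b w) \<le> B"
    and z: "z \<in> closure W"
  shows "norm (resolvent b z) \<le> B"
proof (rule ccontr)
  define K where "K = closure W"
  define f where "f w = norm (resolvent b w)" for w
  have "compact K" "K \<noteq> {}" using W z by (auto simp: K_def compact_closure)
  moreover have "continuous_on K f"
    unfolding f_def using resolvent_set
    by (intro continuous_on_norm continuous_on_subset[OF continuous_on_resolvent])
      (auto simp: K_def)
  ultimately obtain z1 where z1: "z1 \<in> K" "\<And>w. w \<in> K \<Longrightarrow> f w \<le> f z1"
    "\<And>w. w \<in> K \<Longrightarrow> f w = f z1 \<Longrightarrow> Re w \<le> Re z1"
    by (rule continuous_attains_sup_max_Re) blast
  assume "\<not> ?thesis"
  then have "B < f z1" using z1(2)[of z] z by (simp add: K_def f_def)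
  then have "z1 \<notin> frontier W" using frontier by (force simp: f_def)
  then have "z1 \<in> W" using z1(1) W(2) by (auto simp: K_def frontier_def interior_open)
  then obtain e where e: "e > 0" "ball z1 e \<subseteq> W" using W(2) open_contains_ball by blast
  define M where "M = f z1"
  have M0: "0 \<le> M" by (simp add: M_def f_def)
  define \<rho> where "\<rho> = min (e / 2) (1 / (4 * (M + 1)))"
  have \<rho>: "0 < \<rho>" "\<rho> < e" using e M0 by (auto simp: \<rho>_def)
  have "\<rho> * M \<le> 1 / (4 * (M + 1)) * (M + 1)"
    using M0 \<rho> by (intro mult_mono) (auto simp: \<rho>_def)
  also have "\<dots> = 1/4" using M0 by simp
  finally have small: "\<rho> * f z1 \<le> 1/4" by (simp add: M_def)
  have sphere: "sphere z1 \<rho> \<subseteq> K" using e \<rho> closure_subset[of W] by (auto simp: K_def)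
  have "z1 \<notin> spectrum b" using z1(1) resolvent_set by (auto simp: K_def)
  then have "f (z1 + of_real \<rho>) = f z1"
    using norm_resolvent_eq_of_circle_le[OF _ \<rho>(1)] small sphere z1(2) unfolding f_def by blast
  moreover have "z1 + of_real \<rho> \<in> K" using sphere \<rho> by (auto simp: dist_norm)
  ultimately show False using z1(3) \<rho>(1) by force
qed

section \<open>Separating a component of a compact set\<close>

lemma compact_component_clopen_subset:
  fixes S :: "'a::metric_space set"
  assumes S: "compact S" and C: "C \<in> components S" and U: "open U" "C \<subseteq> U"
  obtains K where "C \<subseteq> K" "K \<subseteq> U" "K \<subseteq> S" "closed K" "closed (S - K)"
proof -
  let ?X = "top_of_set S"
  obtain x where x: "x \<in> S" "C = connected_component_set S x" using C by (auto simp: components_iff)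
  have "connected_component_of_set ?X x = C"
    by (auto simp: x(2) connected_component_of_def connected_component_def connectedin_subtopology)
  then have "C \<in> connected_components_of ?X" using x(1) by (auto simp: connected_components_of_def)
  moreover have "compactin ?X C"
    using compact_Int_closed[OF S closed_components[OF compact_imp_closed[OF S] C]]
      in_components_subset[OF C]
    by (simp add: compactin_subtopology Int_absorb1)
  moreover have "locally_compact_space ?X"
    using S by (intro compact_imp_locally_compact_space compact_space_subtopology) simp
  moreover have "openin ?X (S \<inter> U)" using U(1) by (auto simp: openin_open)
  ultimately obtain K V where KV: "openin ?X K" "openin ?X V" "disjnt K V" "K \<union> V = S"
    "C \<subseteq> K" "K \<subseteq> S \<inter> U"
    using wilder_locally_compact_component_thm[of ?X C "S \<inter> U"] U(2) in_components_subset[OF C]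
      Hausdorff_space_subtopology[OF Hausdorff_space_euclidean]
    by (metis le_inf_iff topspace_euclidean_subtopology)
  have "K = S - V" "V = S - K" using KV(3,4) by (auto simp: disjnt_def)
  then have "closedin ?X K" "closedin ?X (S - K)"
    using KV(1,2) by (metis closedin_diff closedin_topspace topspace_euclidean_subtopology)+
  then have "closed K" "closed (S - K)"
    using compact_imp_closed[OF S] closedin_closed_trans by blast+
  then show thesis using that KV(5,6) by blast
qed

lemma frontier_subset_frontier_of_clopen:
  assumes "K \<subseteq> S" "closed K" "closed (S - K)"
  shows "frontier K \<subseteq> frontier S"
proof
  fix x assume x: "x \<in> frontier K"
  then have "x \<in> K" using frontier_subset_closed[OF assms(2)] by blast
  have "x \<notin> interior S"
  proof
    assume "x \<in> interior S"
    moreover have "open (interior S - (S - K))" using assms(3) by (simp add: open_Diff)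
    moreover have "interior S - (S - K) \<subseteq> K" using interior_subset by blast
    ultimately have "x \<in> interior K" using \<open>x \<in> K\<close> interior_maximal by blast
    then show False using x by (simp add: frontier_def)
  qed
  then show "x \<in> frontier S" using \<open>x \<in> K\<close> assms(1) closure_subset by (auto simp: frontier_def)
qed

lemma compact_separated_neighbourhood:
  fixes K :: "'a::euclidean_space set"
  assumes "compact K" "open U" "K \<subseteq> U" "closed F" "K \<inter> F = {}"
  obtains W where "open W" "bounded W" "K \<subseteq> W" "closure W \<subseteq> U" "closure W \<inter> F = {}"
proof -
  have "closed (F \<union> - U)" using assms(2,4) by (simp add: closed_Un closed_Compl)
  moreover have "K \<inter> (F \<union> - U) = {}" using assms(3,5) by blast
  ultimately obtain W V where WV: "open W" "compact (closure W)" "open V" "K \<subseteq> W" "F \<union> - U \<subseteq> V"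
    "W \<inter> V = {}"
    using separation_normal_compact[OF assms(1)] by metis
  then have "V \<inter> closure W = {}" by (simp add: open_Int_closure_eq_empty inf_commute)
  moreover have "bounded W" using bounded_subset[OF compact_imp_bounded[OF WV(2)] closure_subset] .
  ultimately show thesis using that WV by blast
qed

lemma exists_component_subset_of_frontier_disjoint:
  assumes "S \<inter> frontier W = {}" "S \<inter> W \<noteq> {}"
  shows "\<exists>C\<in>components S. C \<subseteq> W"
proof -
  obtain x where x: "x \<in> S" "x \<in> W" using assms(2) by blast
  define C where "C = connected_component_set S x"
  have "C \<subseteq> W"
  proof (rule ccontr)
    assume "\<not> C \<subseteq> W"
    moreover have "x \<in> C" using x(1) by (simp add: C_def)
    moreover have "connected C" by (simp add: C_def)
    ultimately have "C \<inter> frontier W \<noteq> {}"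
      using connected_Int_frontier[of C W] x(2) by blast
    moreover have "C \<subseteq> S" by (simp add: C_def connected_component_subset)
    ultimately show False using assms(1) by blast
  qed
  moreover have "C \<in> components S" using x(1) by (auto simp: components_iff C_def)
  ultimately show ?thesis by blast
qed

section \<open>Resolvents along a \<open>\<nu>\<close>-convergent sequence\<close>

lemma nu_conv_diff_square_tendsto:
  fixes as :: "nat \<Rightarrow> 'a::real_normed_algebra"
  assumes "nu_conv as a"
  shows "(\<lambda>n. norm ((as n - a) * (as n - a))) \<longlonglongrightarrow> 0"
proof (rule tendsto_sandwich[of "\<lambda>n. 0" _ _ "\<lambda>n. norm ((as n - a) * as n) + norm ((as n - a) * a)"])
  have "(as n - a) * (as n - a) = (as n - a) * as n - (as n - a) * a" for n
    by (simp add: algebra_simps)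
  then show "\<forall>\<^sub>F n in sequentially. norm ((as n - a) * (as n - a))
      \<le> norm ((as n - a) * as n) + norm ((as n - a) * a)"
    by (simp add: norm_triangle_ineq4)
  show "(\<lambda>n. norm ((as n - a) * as n) + norm ((as n - a) * a)) \<longlonglongrightarrow> 0"
    using assms unfolding nu_conv_def by (intro tendsto_add_zero) auto
qed auto

lemma resolvent_add_approx_inverse:
  fixes a d :: "'a::complex_normed_algebra_1"
  assumes z: "z \<notin> spectrum a"
  defines "R \<equiv> resolvent a z"
  shows "(of_complex z - (a + d)) * (R + R * d * R) = 1 - d * R * d * R"
    "(R + R * d * R) * (of_complex z - (a + d)) = 1 - R * (d * R * d)"
    "of_complex z * (d * R * d) = d * d + d * a * R * d"
proof -
  define y where "y = of_complex z - a"
  have yR: "y * R = 1" "R * y = 1" using resolvent_cancel[OF z] by (simp_all add: R_def y_def)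
  have yRdR: "y * (R * (d * R)) = d * R" by (metis yR(1) mult.assoc mult_1_left)
  have RdRy: "R * d * R * y = R * d" by (metis yR(2) mult.assoc mult_1_right)
  have yd: "of_complex z - (a + d) = y - d" by (simp add: y_def)
  show "(of_complex z - (a + d)) * (R + R * d * R) = 1 - d * R * d * R"
    unfolding yd by (simp add: algebra_simps yR yRdR mult.assoc)
  show "(R + R * d * R) * (of_complex z - (a + d)) = 1 - R * (d * R * d)"
    unfolding yd by (simp add: algebra_simps yR RdRy mult.assoc)
  have zR: "of_complex z * R = 1 + a * R" using yR(1) by (simp add: y_def algebra_simps)
  have "of_complex z * (d * R * d) = d * (of_complex z * R) * d"
    by (metis of_complex_commute mult.assoc)
  also have "\<dots> = d * d + d * a * R * d"
    by (simp add: zR algebra_simps)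
  finally show "of_complex z * (d * R * d) = d * d + d * a * R * d" .
qed

text \<open>The error \<open>d R d\<close> of the approximate inverse is controlled by the two products that
  \<open>\<nu>\<close>-convergence makes small, at the price of a factor \<open>1 / \<bar>z\<bar>\<close>.\<close>

lemma resolvent_add_bound:
  fixes a d :: "'a::{complex_normed_algebra_1, banach}"
  assumes z: "z \<notin> spectrum a" "z \<noteq> 0" and R: "norm (resolvent a z) \<le> B" and d: "norm d \<le> D"
    and small: "B * (norm (d * d) + norm (d * a) * B * D) \<le> cmod z / 2"
  shows "z \<notin> spectrum (a + d)" "norm (resolvent (a + d) z) \<le> 2 * (B + B * D * B)"
proof -
  define R where "R = resolvent a z"
  note approx = resolvent_add_approx_inverse[OF z(1), of d, folded R_def]
  have B: "0 \<le> B" using R norm_ge_zero order_trans by blast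
  have D: "0 \<le> D" using d norm_ge_zero order_trans by blast
  have "cmod z * norm (d * R * d) = norm (d * d + d * a * R * d)"
    using approx(3) by (metis norm_of_complex_mult)
  also have "\<dots> \<le> norm (d * d) + norm (d * a) * norm R * norm d"
    by (rule order_trans[OF norm_triangle_ineq add_left_mono])
      (metis norm_mult_ineq mult_right_mono norm_ge_zero order_trans)
  also have "\<dots> \<le> norm (d * d) + norm (d * a) * B * D"
    using R d B by (intro add_left_mono mult_mono mult_left_mono) (auto simp: R_def)
  finally have "B * (cmod z * norm (d * R * d)) \<le> cmod z / 2"
    using small B by (meson mult_left_mono order_trans)
  then have dRd: "B * norm (d * R * d) \<le> 1/2"
    using z(2) by (simp add: field_simps)
  have "norm (d * R * d * R) \<le> 1/2" and "norm (R * (d * R * d)) \<le> 1/2"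
    using dRd R norm_mult_ineq[of "d * R * d" R] norm_mult_ineq[of R "d * R * d"]
      mult_left_mono[of "norm R" B "norm (d * R * d)"]
    by (auto simp: R_def mult.commute)
  then have inv: "ba_invertible (of_complex z - (a + d))"
    "norm (ba_inverse (of_complex z - (a + d))) \<le> 2 * norm (R + R * d * R)"
    using ba_invertible_approx_inverse[OF approx(1,2)] by blast+
  have "norm (R * d * R) \<le> norm R * norm d * norm R"
    by (metis norm_mult_ineq mult_right_mono norm_ge_zero order_trans)
  also have "\<dots> \<le> B * D * B" using R d B D by (intro mult_mono) (auto simp: R_def)
  finally have "norm (R + R * d * R) \<le> B + B * D * B"
    using norm_triangle_ineq[of R "R * d * R"] R by (simp add: R_def)
  then show "z \<notin> spectrum (a + d)" "norm (resolvent (a + d) z) \<le> 2 * (B + B * D * B)"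
    using inv by (simp_all add: spectrum_iff resolvent_def)
qed

lemma eventually_resolvent_bounded:
  fixes a :: "'a::{complex_normed_algebra_1, banach}"
  assumes nu: "nu_conv as a" and G: "compact G" "G \<inter> spectrum a = {}" "0 \<notin> G"
  obtains B where
    "\<forall>\<^sub>F n in sequentially. \<forall>z\<in>G. z \<notin> spectrum (as n) \<and> norm (resolvent (as n) z) \<le> B"
proof -
  have "continuous_on G (resolvent a)"
    using continuous_on_subset[OF continuous_on_resolvent] G(2) by blast
  then have "bounded (resolvent a ` G)"
    using G(1) by (intro compact_imp_bounded compact_continuous_image)
  then obtain B0 where B0: "0 < B0" "\<And>z. z \<in> G \<Longrightarrow> norm (resolvent a z) \<le> B0"
    unfolding bounded_pos by blast
  obtain \<delta> where \<delta>: "0 < \<delta>" "\<And>z. z \<in> G \<Longrightarrow> \<delta> \<le> cmod z"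
    using separate_point_closed[OF compact_imp_closed[OF G(1)] G(3)] by auto
  obtain M where M: "\<And>n. norm (as n) \<le> M" using nu by (auto simp: nu_conv_def)
  define D where "D = M + norm a"
  have D: "norm (as n - a) \<le> D" for n
    using M[of n] norm_triangle_ineq4[of "as n" a] by (simp add: D_def)
  define \<eta> where "\<eta> n = B0 * (norm ((as n - a) * (as n - a)) + norm ((as n - a) * a) * B0 * D)"
    for n
  have "\<eta> \<longlonglongrightarrow> B0 * (0 + 0 * B0 * D)"
    unfolding \<eta>_def using nu nu_conv_diff_square_tendsto[OF nu] unfolding nu_conv_def
    by (intro tendsto_intros) auto
  then have "\<forall>\<^sub>F n in sequentially. \<eta> n < \<delta> / 2" using \<delta>(1) by (intro order_tendstoD(2)) auto
  then have "\<forall>\<^sub>F n in sequentially.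
      \<forall>z\<in>G. z \<notin> spectrum (as n) \<and> norm (resolvent (as n) z) \<le> 2 * (B0 + B0 * D * B0)"
  proof eventually_elim
    case (elim n)
    show ?case
    proof
      fix z assume z: "z \<in> G"
      have "\<eta> n \<le> cmod z / 2" using elim \<delta>(2)[OF z] by linarith
      then show "z \<notin> spectrum (as n) \<and> norm (resolvent (as n) z) \<le> 2 * (B0 + B0 * D * B0)"
        using resolvent_add_bound[of z a B0 "as n - a" D] z G(2,3) B0(2) D by (auto simp: \<eta>_def)
    qed
  qed
  then show thesis by (rule that)
qed

lemma mult_eq_resolvent_expansion:
  fixes a c x :: "'a::complex_normed_algebra_1"
  assumes "l \<notin> spectrum c"
  shows "a * x = resolvent c l * a * ((of_complex l - a) * x) + resolvent c l * ((a - c) * a) * x"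
proof -
  have "(of_complex l - c) * a = a * (of_complex l - a) + (a - c) * a"
    by (simp add: algebra_simps of_complex_commute)
  then have "a = resolvent c l * (a * (of_complex l - a) + (a - c) * a)"
    using resolvent_cancel(2)[OF assms] by (metis mult.assoc mult_1_left)
  then show ?thesis by (metis distrib_left distrib_right mult.assoc)
qed

lemma cmod_spectrum_point_less:
  fixes a c :: "'a::{complex_normed_algebra_1, banach}"
  assumes l: "l \<in> spectrum a" "l \<notin> spectrum c" and \<mu>: "\<mu> \<notin> spectrum a"
  shows "cmod l < 3 * cmod (\<mu> - l) * (1 + norm (resolvent c l) * norm a)
    + norm (resolvent c l) * norm ((c - a) * a)"
proof -
  define Rc where "Rc = resolvent c l"
  define u where "u = resolvent a \<mu>"
  define t where "t = cmod (\<mu> - l)"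
  define v where "v = (of_complex l - a) * u"
  have "1/2 < norm u * t"
    using norm_resolvent_dist_gt[OF l(1) \<mu>] by (simp add: u_def t_def norm_minus_commute)
  then have u_large: "1 + t * norm u < 3 * t * norm u" by (simp add: algebra_simps)
  have "v = 1 - of_complex (\<mu> - l) * u"
    using resolvent_cancel(1)[OF \<mu>] by (simp add: v_def u_def of_complex_diff algebra_simps)
  then have v: "norm v \<le> 1 + t * norm u"
    using norm_triangle_ineq4[of 1 "of_complex (\<mu> - l) * u"]
    by (simp add: norm_of_complex_mult t_def)
  have "of_complex l * u = a * u + v" by (simp add: v_def algebra_simps)
  then have "cmod l * norm u = norm (a * u + v)" using norm_of_complex_mult[of l u] by simp
  also have "\<dots> \<le> norm Rc * norm a * norm v + norm Rc * norm ((c - a) * a) * norm u + norm v"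
  proof -
    have "norm (Rc * a * v) \<le> norm Rc * norm a * norm v"
      by (rule order_trans[OF norm_mult_ineq mult_right_mono[OF norm_mult_ineq norm_ge_zero]])
    moreover have "(a - c) * a = - ((c - a) * a)" by (simp add: algebra_simps)
    then have "norm (Rc * ((a - c) * a) * u) \<le> norm Rc * norm ((c - a) * a) * norm u"
      using order_trans[OF norm_mult_ineq mult_right_mono[OF norm_mult_ineq norm_ge_zero]]
      by (metis norm_minus_cancel)
    moreover have "norm (a * u) \<le> norm (Rc * a * v) + norm (Rc * ((a - c) * a) * u)"
      unfolding Rc_def v_def
      by (subst mult_eq_resolvent_expansion[OF l(2)]) (rule norm_triangle_ineq)
    ultimately show ?thesis using norm_triangle_ineq[of "a * u" v] by linarith
  qed
  also have "\<dots> = (1 + norm Rc * norm a) * norm v + norm Rc * norm ((c - a) * a) * norm u"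
    by (simp add: algebra_simps)
  also have "\<dots> < (1 + norm Rc * norm a) * (3 * t * norm u) + norm Rc * norm ((c - a) * a) * norm u"
    using v u_large by (intro add_strict_right_mono mult_strict_left_mono)
      (auto intro: add_pos_nonneg le_less_trans)
  also have "\<dots> = (3 * t * (1 + norm Rc * norm a) + norm Rc * norm ((c - a) * a)) * norm u"
    by (simp add: algebra_simps)
  finally show ?thesis
    by (simp add: Rc_def t_def mult_less_cancel_right)
qed

lemma eventually_norm_resolvent_gt:
  fixes a :: "'a::{complex_normed_algebra_1, banach}"
  assumes conv: "(\<lambda>n. norm ((as n - a) * a)) \<longlonglongrightarrow> 0"
    and l: "l \<in> frontier (spectrum a)" "l \<noteq> 0"
  shows "\<forall>\<^sub>F n in sequentially. l \<notin> spectrum (as n) \<longrightarrow> B < norm (resolvent (as n) l)"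
proof -
  define B' where "B' = max B 0"
  have B': "0 \<le> B'" by (simp add: B'_def)
  have "closed (spectrum a)" by (rule compact_imp_closed[OF compact_spectrum])
  then have "l \<in> spectrum a" "l \<in> closure (- spectrum a)"
    using l(1) by (auto simp: frontier_def closure_complement)
  define p where "p = 1 + B' * norm a"
  have p: "0 < p" using B' by (simp add: p_def add_pos_nonneg)
  define e where "e = cmod l / (6 * p)"
  have e: "0 < e" using l(2) p by (simp add: e_def)
  obtain \<mu> where \<mu>: "\<mu> \<notin> spectrum a" "cmod (\<mu> - l) < e"
    using closure_approachableD[OF \<open>l \<in> closure (- spectrum a)\<close> e]
    by (auto simp: dist_norm norm_minus_commute)
  have "3 * cmod (\<mu> - l) * p \<le> 3 * e * p"
    using \<mu>(2) p by (intro mult_right_mono) auto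
  also have "\<dots> = cmod l / 2" using p by (simp add: e_def)
  finally have near: "3 * cmod (\<mu> - l) * (1 + B' * norm a) \<le> cmod l / 2" by (simp add: p_def)
  have "(\<lambda>n. B' * norm ((as n - a) * a)) \<longlonglongrightarrow> B' * 0" by (intro tendsto_intros conv)
  then have "\<forall>\<^sub>F n in sequentially. B' * norm ((as n - a) * a) < cmod l / 2"
    using l(2) by (intro order_tendstoD(2)) auto
  then show ?thesis
  proof eventually_elim
    case (elim n)
    show ?case
    proof
      assume inv: "l \<notin> spectrum (as n)"
      show "B < norm (resolvent (as n) l)"
      proof (rule ccontr)
        assume "\<not> B < norm (resolvent (as n) l)"
        then have R: "norm (resolvent (as n) l) \<le> B'" by (simp add: B'_def)
        have "cmod l < 3 * cmod (\<mu> - l) * (1 + norm (resolvent (as n) l) * norm a)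
            + norm (resolvent (as n) l) * norm ((as n - a) * a)"
          by (rule cmod_spectrum_point_less[OF \<open>l \<in> spectrum a\<close> inv \<mu>(1)])
        also have "\<dots> \<le> 3 * cmod (\<mu> - l) * (1 + B' * norm a) + B' * norm ((as n - a) * a)"
          using R by (intro add_mono mult_left_mono mult_right_mono) auto
        finally show False using near elim by linarith
      qed
    qed
  qed
qed

lemma eventually_component_of_spectrum_subset:
  fixes a :: "'a::{complex_normed_algebra_1, banach}"
  assumes nu: "nu_conv as a"
    and W: "open W" "bounded W" "frontier W \<inter> spectrum a = {}" "0 \<notin> frontier W"
    and l: "l \<in> W" "l \<in> frontier (spectrum a)" "l \<noteq> 0"
  shows "\<forall>\<^sub>F n in sequentially. \<exists>C\<in>components (spectrum (as n)). C \<subseteq> W"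
proof -
  have conv: "(\<lambda>n. norm ((as n - a) * a)) \<longlonglongrightarrow> 0" using nu unfolding nu_conv_def by blast
  obtain B where "\<forall>\<^sub>F n in sequentially.
      \<forall>z\<in>frontier W. z \<notin> spectrum (as n) \<and> norm (resolvent (as n) z) \<le> B"
    by (rule eventually_resolvent_bounded[OF nu compact_frontier_bounded[OF W(2)] W(3,4)])
  moreover have "\<forall>\<^sub>F n in sequentially. l \<notin> spectrum (as n) \<longrightarrow> B < norm (resolvent (as n) l)"
    using conv l(2,3) by (rule eventually_norm_resolvent_gt)
  ultimately show ?thesis
  proof eventually_elim
    case (elim n)
    have "spectrum (as n) \<inter> W \<noteq> {}"
    proof
      assume empty: "spectrum (as n) \<inter> W = {}"
      then have "closure W \<inter> spectrum (as n) = {}"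
        using elim(1) closure_Un_frontier[of W] by blast
      then have "norm (resolvent (as n) l) \<le> B"
        using norm_resolvent_maximum_principle[OF W(2,1), of "as n" B l] elim(1) l(1) closure_subset
        by blast
      moreover have "l \<notin> spectrum (as n)" using empty l(1) by blast
      ultimately show False using elim(2) by simp
    qed
    moreover have "spectrum (as n) \<inter> frontier W = {}" using elim(1) by blast
    ultimately show ?case by (rule exists_component_subset_of_frontier_disjoint[rotated])
  qed
qed

theorem lemma2p1:
  fixes a :: "'a::{complex_normed_algebra_1, banach}"
    and as :: "nat \<Rightarrow> 'a"
    and U :: "complex set"
  assumes "nu_conv as a"
    and "open U" and "0 \<notin> U"
    and "\<exists>C\<in>components (spectrum a). C \<subseteq> U"
  shows "\<exists>n0. \<forall>n\<ge>n0. \<exists>C\<in>components (spectrum (as n)). C \<subseteq> U"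
proof -
  obtain C where C: "C \<in> components (spectrum a)" "C \<subseteq> U" using assms(4) by blast
  obtain K where K: "C \<subseteq> K" "K \<subseteq> U" "K \<subseteq> spectrum a" "closed K" "closed (spectrum a - K)"
    using compact_component_clopen_subset[OF compact_spectrum C(1) assms(2) C(2)] .
  have "compact K"
    using compact_Int_closed[OF compact_spectrum[of a] K(4)] K(3) by (simp add: Int_absorb1)
  moreover have "K \<noteq> {}" using in_components_nonempty[OF C(1)] K(1) by blast
  moreover have "K \<noteq> UNIV" using compact_imp_bounded[OF \<open>compact K\<close>] by auto
  ultimately obtain l where "l \<in> frontier K" using frontier_not_empty by blast
  then have l: "l \<in> K" "l \<in> frontier (spectrum a)"
    using frontier_subset_closed[OF K(4)] frontier_subset_frontier_of_clopen[OF K(3-5)] by blast+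
  obtain W where W: "open W" "bounded W" "K \<subseteq> W" "closure W \<subseteq> U" "closure W \<inter> (spectrum a - K) = {}"
    using compact_separated_neighbourhood[OF \<open>compact K\<close> assms(2) K(2,5)] by blast
  have "frontier W \<inter> spectrum a = {}" using W(1,3,5) by (auto simp: frontier_def interior_open)
  moreover have "0 \<notin> frontier W" using W(4) assms(3) by (auto simp: frontier_def)
  ultimately have "\<forall>\<^sub>F n in sequentially. \<exists>C\<in>components (spectrum (as n)). C \<subseteq> W"
    by (rule eventually_component_of_spectrum_subset[OF assms(1) W(1,2)])
      (use l W(3) K(2) assms(3) in auto)
  moreover have "W \<subseteq> U" using W(4) closure_subset by blast
  ultimately show ?thesis unfolding eventually_sequentially by (meson order_trans)
qed

end
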